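(* Let $R$ be a Prüfer domain and $n\ge 1$. Then every $n$-absorbing ideal of $R$ is strongly $n$-absorbing.
   Context: A Prüfer domain is an integral domain in which every nonzero finitely generated ideal is invertible. An ideal $I$ of $R$ is $n$-absorbing if whenever $x_1,\dots,x_{n+1}\in R$ and $x_1x_2\cdots x_{n+1}\in I$, the product of some $n$ of the $x_i$'s lies in $I$. An ideal $I$ of $R$ is strongly $n$-absorbing if whenever $I_1,\dots,I_{n+1}$ are ideals of $R$ with $I_1I_2\cdots I_{n+1}\subseteq I$, the product of some $n$ of the $I_j$'s is contained in $I$. *)

theory Defs
  imports "HOL-Computational_Algebra.Fraction_Field"
begin

text \<open>Ideals of a commutative ring (type-class idiom; the ring is the whole type).\<close>
definition is_ideal :: "'a::comm_ring_1 set \<Rightarrow> bool" where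
  "is_ideal I \<longleftrightarrow> 0 \<in> I \<and> (\<forall>x\<in>I. \<forall>y\<in>I. x + y \<in> I) \<and> (\<forall>r x. x \<in> I \<longrightarrow> r * x \<in> I)"

definition ideal_gen :: "'a::comm_ring_1 set \<Rightarrow> 'a set" where
  "ideal_gen S = \<Inter>{J. is_ideal J \<and> S \<subseteq> J}"

definition fin_gen_ideal :: "'a::comm_ring_1 set \<Rightarrow> bool" where
  "fin_gen_ideal I \<longleftrightarrow> (\<exists>S. finite S \<and> I = ideal_gen S)"

definition ideal_prod :: "(nat \<Rightarrow> 'a::comm_ring_1 set) \<Rightarrow> nat set \<Rightarrow> 'a set" where
  "ideal_prod Is A = ideal_gen {\<Prod>i\<in>A. x i | x. \<forall>i\<in>A. x i \<in> Is i}"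

text \<open>Fractional ideals live in the fraction field 'a fract; R is embedded via Fract r 1.\<close>
definition R_submodule :: "'a::idom fract set \<Rightarrow> bool" where
  "R_submodule J \<longleftrightarrow> 0 \<in> J \<and> (\<forall>x\<in>J. \<forall>y\<in>J. x + y \<in> J) \<and> (\<forall>r x. x \<in> J \<longrightarrow> Fract r 1 * x \<in> J)"

definition frac_mult :: "'a::idom set \<Rightarrow> 'a fract set \<Rightarrow> 'a fract set" where
  "frac_mult I J = {\<Sum>i<m. Fract (a i) 1 * b i | (m::nat) (a::nat \<Rightarrow> 'a) (b::nat \<Rightarrow> 'a fract). \<forall>i<m. a i \<in> I \<and> b i \<in> J}"

definition invertible_ideal :: "'a::idom set \<Rightarrow> bool" where
  "invertible_ideal I \<longleftrightarrow> (\<exists>J. R_submodule J \<and> frac_mult I J = range (\<lambda>r. Fract r 1))"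

definition pruefer_domain :: "'a::idom itself \<Rightarrow> bool" where
  "pruefer_domain _ \<longleftrightarrow> (\<forall>I::'a set. is_ideal I \<and> I \<noteq> {0} \<and> fin_gen_ideal I \<longrightarrow> invertible_ideal I)"

definition n_absorbing :: "nat \<Rightarrow> 'a::comm_ring_1 set \<Rightarrow> bool" where
  "n_absorbing n I \<longleftrightarrow> is_ideal I \<and>
     (\<forall>x :: nat \<Rightarrow> 'a. (\<Prod>i\<le>n. x i) \<in> I \<longrightarrow> (\<exists>j\<le>n. (\<Prod>i\<in>{..n} - {j}. x i) \<in> I))"

definition strongly_n_absorbing :: "nat \<Rightarrow> 'a::comm_ring_1 set \<Rightarrow> bool" where
  "strongly_n_absorbing n I \<longleftrightarrow> is_ideal I \<and>
     (\<forall>Is :: nat \<Rightarrow> 'a set. (\<forall>i\<le>n. is_ideal (Is i)) \<longrightarrow> ideal_prod Is {..n} \<subseteq> I \<longrightarrow>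
        (\<exists>j\<le>n. ideal_prod Is ({..n} - {j}) \<subseteq> I))"

end

theory Submission
  imports Defs
begin

text \<open>Suppose \<open>I\<^sub>0 \<cdots> I\<^sub>n \<subseteq> I\<close> but no product of \<open>n\<close> of the ideals is contained in \<open>I\<close>.
  Then for every \<open>j\<close> there are elements \<open>z j i \<in> I\<^sub>i\<close> (\<open>i \<noteq> j\<close>) whose product \<open>y\<^sub>j\<close> is not in
  \<open>I\<close>, and a maximal ideal \<open>M\<^sub>j\<close> containing \<open>(I : y\<^sub>j)\<close>. In a Pruefer domain the finitely
  generated ideal \<open>J\<^sub>i \<subseteq> I\<^sub>i\<close> generated by the \<open>z j i\<close> is invertible, hence locally principal,
  and prime avoidance yields a single \<open>x\<^sub>i \<in> J\<^sub>i\<close> generating \<open>J\<^sub>i\<close> locally at each of the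
  finitely many \<open>M\<^sub>j\<close>. As \<open>x\<^sub>0 \<cdots> x\<^sub>n \<in> I\<close>, the \<open>n\<close>-absorbing property removes some factor
  \<open>x\<^sub>j\<close>; locally at \<open>M\<^sub>j\<close> the remaining product divides \<open>y\<^sub>j\<close>, so \<open>s y\<^sub>j \<in> I\<close> for some
  \<open>s \<notin> M\<^sub>j\<close>, contradicting \<open>(I : y\<^sub>j) \<subseteq> M\<^sub>j\<close>.\<close>

lemma ideal_zero: "is_ideal I \<Longrightarrow> 0 \<in> I"
  by (simp add: is_ideal_def)

lemma ideal_add: "is_ideal I \<Longrightarrow> x \<in> I \<Longrightarrow> y \<in> I \<Longrightarrow> x + y \<in> I"
  by (simp add: is_ideal_def)

lemma ideal_mult_left: "is_ideal I \<Longrightarrow> x \<in> I \<Longrightarrow> r * x \<in> I"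
  by (simp add: is_ideal_def)

lemma ideal_mult_right: "is_ideal I \<Longrightarrow> x \<in> I \<Longrightarrow> x * r \<in> I"
  using ideal_mult_left[of I x r] by (simp add: mult.commute)

lemma ideal_dvd: "is_ideal I \<Longrightarrow> x \<in> I \<Longrightarrow> x dvd y \<Longrightarrow> y \<in> I"
  by (auto elim!: dvdE intro: ideal_mult_right)

lemma ideal_diff: "is_ideal I \<Longrightarrow> x \<in> I \<Longrightarrow> y \<in> I \<Longrightarrow> x - y \<in> I"
  using ideal_add[of I x "-1 * y"] ideal_mult_left[of I y "-1"] by simp

lemma ideal_sum: "is_ideal I \<Longrightarrow> (\<And>i. i \<in> A \<Longrightarrow> f i \<in> I) \<Longrightarrow> sum f A \<in> I"
  by (induction A rule: infinite_finite_induct) (auto intro: ideal_zero ideal_add)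

lemma ideal_gen_subset: "S \<subseteq> ideal_gen S"
  unfolding ideal_gen_def by blast

lemma ideal_gen_minimal: "is_ideal J \<Longrightarrow> S \<subseteq> J \<Longrightarrow> ideal_gen S \<subseteq> J"
  unfolding ideal_gen_def by blast

lemma is_ideal_ideal_gen: "is_ideal (ideal_gen S)"
  unfolding ideal_gen_def by (simp add: is_ideal_def)

lemma is_ideal_colon: "is_ideal I \<Longrightarrow> is_ideal {r. r * y \<in> I}"
  unfolding is_ideal_def by (simp add: distrib_right mult.assoc)

lemma prod_in_ideal_prod: "(\<And>i. i \<in> A \<Longrightarrow> x i \<in> Is i) \<Longrightarrow> prod x A \<in> ideal_prod Is A"
  unfolding ideal_prod_def by (rule subsetD[OF ideal_gen_subset]) blast

lemma ideal_prod_not_subset: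
  assumes "is_ideal I" and "\<not> ideal_prod Is A \<subseteq> I"
  shows "\<exists>z. (\<forall>i\<in>A. z i \<in> Is i) \<and> prod z A \<notin> I"
proof (rule ccontr)
  assume "\<not> ?thesis"
  then have "{\<Prod>i\<in>A. x i | x. \<forall>i\<in>A. x i \<in> Is i} \<subseteq> I"
    by blast
  then have "ideal_prod Is A \<subseteq> I"
    unfolding ideal_prod_def by (rule ideal_gen_minimal[OF assms(1)])
  with assms(2) show False ..
qed

subsection \<open>Maximal ideals\<close>

definition maximal_ideal :: "'a::comm_ring_1 set \<Rightarrow> bool" where
  "maximal_ideal M \<longleftrightarrow> is_ideal M \<and> 1 \<notin> M \<and> (\<forall>K. is_ideal K \<and> M \<subseteq> K \<and> 1 \<notin> K \<longrightarrow> K = M)"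

lemma maximal_ideal_prime:
  assumes "maximal_ideal M" and "a * b \<in> M" and "a \<notin> M"
  shows "b \<in> M"
proof -
  have M: "is_ideal M" using assms(1) by (simp add: maximal_ideal_def)
  define K where "K = {m + c * a | m c. m \<in> M}"
  have "is_ideal K"
    unfolding is_ideal_def K_def
  proof (intro conjI ballI allI impI)
    show "0 \<in> {m + c * a | m c. m \<in> M}"
      using ideal_zero[OF M] by (intro CollectI exI[of _ 0]) simp
  next
    fix x y assume "x \<in> {m + c * a | m c. m \<in> M}" "y \<in> {m + c * a | m c. m \<in> M}"
    then obtain m1 c1 m2 c2 where "x = m1 + c1 * a" "y = m2 + c2 * a" "m1 \<in> M" "m2 \<in> M"
      by blast
    then show "x + y \<in> {m + c * a | m c. m \<in> M}"
      using ideal_add[OF M, of m1 m2]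
      by (intro CollectI exI[of _ "m1 + m2"] exI[of _ "c1 + c2"]) (simp add: algebra_simps)
  next
    fix r x assume "x \<in> {m + c * a | m c. m \<in> M}"
    then obtain m c where "x = m + c * a" "m \<in> M" by blast
    then show "r * x \<in> {m + c * a | m c. m \<in> M}"
      using ideal_mult_left[OF M, of m r]
      by (intro CollectI exI[of _ "r * m"] exI[of _ "r * c"]) (simp add: algebra_simps)
  qed
  moreover have "M \<subseteq> K"
  proof
    fix m assume "m \<in> M"
    then show "m \<in> K"
      unfolding K_def by (intro CollectI exI[of _ m] exI[of _ 0]) simp
  qed
  moreover have "a \<in> K"
    unfolding K_def using ideal_zero[OF M] by (intro CollectI exI[of _ 0] exI[of _ 1]) simp
  ultimately have "1 \<in> K"
    using assms(1,3) unfolding maximal_ideal_def by blast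
  then obtain m c where "1 = m + c * a" "m \<in> M"
    unfolding K_def by blast
  then have "b = b * (m + c * a)"
    by simp
  also have "\<dots> = b * m + c * (a * b)"
    by (simp add: algebra_simps)
  also have "\<dots> \<in> M"
    using ideal_mult_left[OF M \<open>m \<in> M\<close>] ideal_mult_left[OF M assms(2)] by (intro ideal_add[OF M])
  finally show ?thesis .
qed

lemma maximal_ideal_mult_notin:
  "maximal_ideal M \<Longrightarrow> a \<notin> M \<Longrightarrow> b \<notin> M \<Longrightarrow> a * b \<notin> M"
  using maximal_ideal_prime by blast

lemma maximal_ideal_prod_notin:
  assumes "maximal_ideal M" and "finite A" and "\<And>i. i \<in> A \<Longrightarrow> f i \<notin> M"
  shows "prod f A \<notin> M"
  using assms(2,3)
proof (induction A rule: finite_induct)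
  case empty
  then show ?case using assms(1) by (simp add: maximal_ideal_def)
next
  case (insert x F)
  then show ?case using maximal_ideal_mult_notin[OF assms(1)] by simp
qed

lemma exists_maximal_ideal_superset:
  assumes "is_ideal K" and "1 \<notin> K"
  obtains M where "maximal_ideal M" and "K \<subseteq> M"
proof -
  define \<A> where "\<A> = {J. is_ideal J \<and> K \<subseteq> J \<and> 1 \<notin> J}"
  have "\<exists>M\<in>\<A>. \<forall>X\<in>\<A>. M \<subseteq> X \<longrightarrow> X = M"
  proof (rule subset_Zorn_nonempty)
    show "\<A> \<noteq> {}" using assms \<A>_def by blast
  next
    fix C assume "C \<noteq> {}" and "subset.chain \<A> C"
    then have C: "\<And>X. X \<in> C \<Longrightarrow> is_ideal X \<and> K \<subseteq> X \<and> 1 \<notin> X"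
      and lin: "\<And>X Y. X \<in> C \<Longrightarrow> Y \<in> C \<Longrightarrow> X \<subseteq> Y \<or> Y \<subseteq> X"
      by (auto simp: subset_chain_def \<A>_def)
    obtain X0 where "X0 \<in> C" using \<open>C \<noteq> {}\<close> by blast
    have "is_ideal (\<Union>C)"
      unfolding is_ideal_def
    proof (intro conjI ballI allI impI)
      show "0 \<in> \<Union>C" using \<open>X0 \<in> C\<close> C ideal_zero by blast
    next
      fix x y assume "x \<in> \<Union>C" "y \<in> \<Union>C"
      then obtain X Y where XY: "X \<in> C" "Y \<in> C" "x \<in> X" "y \<in> Y" by blast
      then have "x + y \<in> X \<or> x + y \<in> Y"
        using lin[OF \<open>X \<in> C\<close> \<open>Y \<in> C\<close>] C ideal_add by blast
      then show "x + y \<in> \<Union>C" using XY by blast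
    next
      fix r x assume "x \<in> \<Union>C"
      then obtain X where "X \<in> C" "x \<in> X" by blast
      then show "r * x \<in> \<Union>C"
        using C ideal_mult_left by blast
    qed
    moreover have "K \<subseteq> \<Union>C" using \<open>X0 \<in> C\<close> C by blast
    moreover have "1 \<notin> \<Union>C" using C by blast
    ultimately show "\<Union>C \<in> \<A>" unfolding \<A>_def by simp
  qed
  then obtain M where M: "M \<in> \<A>" and max: "\<And>X. X \<in> \<A> \<Longrightarrow> M \<subseteq> X \<Longrightarrow> X = M"
    by blast
  have "maximal_ideal M"
    unfolding maximal_ideal_def
  proof (intro conjI allI impI)
    show "is_ideal M" "1 \<notin> M" using M by (simp_all add: \<A>_def)
    fix X assume "is_ideal X \<and> M \<subseteq> X \<and> 1 \<notin> X"
    then show "X = M" using M max[of X] by (auto simp: \<A>_def)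
  qed
  moreover have "K \<subseteq> M" using M by (simp add: \<A>_def)
  ultimately show ?thesis by (rule that)
qed

lemma maximal_ideal_separating_element:
  assumes "finite L" and L: "\<forall>M\<in>L. maximal_ideal M" and "M \<in> L"
  shows "\<exists>e. e \<notin> M \<and> (\<forall>M'\<in>L - {M}. e \<in> M')"
proof -
  have "\<exists>p. p \<in> M' \<and> p \<notin> M" if "M' \<in> L - {M}" for M'
    using L assms(3) that unfolding maximal_ideal_def by blast
  then obtain p where p: "\<And>M'. M' \<in> L - {M} \<Longrightarrow> p M' \<in> M' \<and> p M' \<notin> M"
    by metis
  have "prod p (L - {M}) \<notin> M"
    using L assms(1,3) p by (intro maximal_ideal_prod_notin) auto
  moreover have "prod p (L - {M}) \<in> M'" if "M' \<in> L - {M}" for M'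
  proof -
    have "is_ideal M'" using L that by (simp add: maximal_ideal_def)
    moreover have "prod p (L - {M}) = p M' * prod p (L - {M} - {M'})"
      using prod.remove[of "L - {M}" M' p] assms(1) that by simp
    ultimately show ?thesis
      using p[OF that] ideal_mult_right by metis
  qed
  ultimately show ?thesis by blast
qed

subsection \<open>Local generators\<close>

text \<open>\<open>S \<subseteq> a R\<^sub>M\<close> in the localization at \<open>M\<close>, expressed without constructing \<open>R\<^sub>M\<close>.\<close>

definition locally_generates :: "'a::comm_ring_1 \<Rightarrow> 'a set \<Rightarrow> 'a set \<Rightarrow> bool" where
  "locally_generates a S M \<longleftrightarrow> (\<exists>u. u \<notin> M \<and> (\<forall>b\<in>S. a dvd u * b))"

lemma locally_generates_subset:
  "locally_generates a S M \<Longrightarrow> S' \<subseteq> S \<Longrightarrow> locally_generates a S' M"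
  unfolding locally_generates_def by blast

lemma locally_generates_prod:
  assumes "maximal_ideal M" and "finite A" and "\<And>i. i \<in> A \<Longrightarrow> locally_generates (x i) {z i} M"
  shows "locally_generates (prod x A) {prod z A} M"
  using assms(2,3)
proof (induction A rule: finite_induct)
  case empty
  then show ?case
    using assms(1) unfolding locally_generates_def maximal_ideal_def by (intro exI[of _ 1]) simp
next
  case (insert i A)
  then have "locally_generates (x i) {z i} M" "locally_generates (prod x A) {prod z A} M"
    by simp_all
  then obtain u v where "u \<notin> M" "v \<notin> M"
    and dvd: "x i dvd u * z i" "prod x A dvd v * prod z A"
    unfolding locally_generates_def by auto
  from dvd have "x i * prod x A dvd (u * z i) * (v * prod z A)"
    by (rule mult_dvd_mono)
  also have "\<dots> = (u * v) * (z i * prod z A)"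
    by (simp add: ac_simps)
  finally have "x i * prod x A dvd (u * v) * (z i * prod z A)" .
  moreover have "u * v \<notin> M"
    using maximal_ideal_mult_notin[OF assms(1) \<open>u \<notin> M\<close> \<open>v \<notin> M\<close>] .
  ultimately show ?case
    using insert.hyps unfolding locally_generates_def by auto
qed

lemma Fract_sum: "Fract (sum f A) 1 = (\<Sum>i\<in>A. Fract (f i) (1::'a::idom))"
proof (induction A rule: infinite_finite_induct)
  case (insert x F)
  then show ?case by (simp add: add_fract flip: insert.IH)
qed (simp_all add: Zero_fract_def)

lemma invertible_ideal_partition_of_unity:
  fixes J :: "'a::idom set"
  assumes "invertible_ideal J"
  shows "\<exists>(k::nat) a t. (\<forall>m<k. a m \<in> J) \<and> (\<Sum>m<k. t m) = 1 \<and> (\<forall>m<k. \<forall>b\<in>J. a m dvd t m * b)"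
proof -
  obtain J' where J': "frac_mult J J' = range (\<lambda>r. Fract r 1)"
    using assms unfolding invertible_ideal_def by blast
  have integral: "\<exists>g. Fract c 1 * d = Fract g 1" if "c \<in> J" "d \<in> J'" for c d
  proof -
    have "Fract c 1 * d \<in> frac_mult J J'"
      unfolding frac_mult_def using that
      by (intro CollectI exI[of _ 1] exI[of _ "\<lambda>_. c"] exI[of _ "\<lambda>_. d"]) simp
    then show ?thesis using J' by auto
  qed
  have "(1::'a fract) \<in> frac_mult J J'"
    unfolding J' One_fract_def by (rule rangeI)
  then obtain k :: nat and a b where one: "1 = (\<Sum>i<k. Fract (a i) 1 * b i)"
    and ab: "\<forall>i<k. a i \<in> J \<and> b i \<in> J'"
    unfolding frac_mult_def by blast
  have "\<forall>i\<in>{..<k}. \<exists>g. Fract (a i) 1 * b i = Fract g 1"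
    using integral ab by blast
  then obtain t where t: "\<And>i. i < k \<Longrightarrow> Fract (a i) 1 * b i = Fract (t i) 1"
    by (auto dest!: bchoice)
  have "Fract (\<Sum>i<k. t i) 1 = (\<Sum>i<k. Fract (a i) 1 * b i)"
    by (simp add: Fract_sum t)
  then have "(\<Sum>i<k. t i) = 1"
    by (simp flip: one add: One_fract_def eq_fract)
  moreover have "a m dvd t m * c" if "m < k" and "c \<in> J" for m c
  proof -
    obtain g where g: "Fract c 1 * b m = Fract g 1"
      using integral ab \<open>m < k\<close> \<open>c \<in> J\<close> by blast
    have "Fract (t m * c) 1 = Fract (t m) 1 * Fract c 1"
      by simp
    also have "\<dots> = Fract (a m) 1 * (Fract c 1 * b m)"
      by (simp only: t[OF \<open>m < k\<close>, symmetric] mult_ac)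
    also have "\<dots> = Fract (a m * g) 1"
      using g by simp
    finally show ?thesis by (simp add: eq_fract)
  qed
  ultimately show ?thesis
    using ab by blast
qed

lemma invertible_ideal_locally_principal:
  fixes J :: "'a::idom set"
  assumes "invertible_ideal J" and "maximal_ideal M"
  shows "\<exists>a\<in>J. locally_generates a J M"
proof -
  obtain k :: nat and a t where a: "\<forall>m<k. a m \<in> J" and t: "(\<Sum>m<k. t m) = 1"
    and dvd: "\<forall>m<k. \<forall>b\<in>J. a m dvd t m * b"
    using invertible_ideal_partition_of_unity[OF assms(1)] by blast
  have M: "is_ideal M" using assms(2) by (simp add: maximal_ideal_def)
  have "\<exists>m<k. t m \<notin> M"
  proof (rule ccontr)
    assume "\<not> ?thesis"
    then have "(\<Sum>m<k. t m) \<in> M"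
      by (intro ideal_sum[OF M]) auto
    then show False using t assms(2) by (simp add: maximal_ideal_def)
  qed
  then show ?thesis
    using a dvd unfolding locally_generates_def by blast
qed

text \<open>The common generator is \<open>x = \<Sum>\<^sub>M e\<^sub>M a\<^sub>M\<close>, where \<open>a\<^sub>M\<close> generates \<open>J\<close> at \<open>M\<close> and
  \<open>e\<^sub>M\<close> lies in every ideal of \<open>L\<close> except \<open>M\<close>.\<close>

lemma common_local_generator:
  fixes J :: "'a::idom set"
  assumes "is_ideal J" and "finite L" and L: "\<forall>M\<in>L. maximal_ideal M"
    and local: "\<forall>M\<in>L. \<exists>a\<in>J. locally_generates a J M"
  shows "\<exists>x\<in>J. \<forall>M\<in>L. locally_generates x J M"
proof -
  from local have "\<forall>M\<in>L. \<exists>a. a \<in> J \<and> locally_generates a J M"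
    by blast
  from bchoice[OF this] obtain a where a: "\<forall>M\<in>L. a M \<in> J \<and> locally_generates (a M) J M"
    by blast
  then have "\<forall>M\<in>L. \<exists>v. v \<notin> M \<and> (\<forall>b\<in>J. a M dvd v * b)"
    unfolding locally_generates_def by blast
  from bchoice[OF this] obtain u where u: "\<forall>M\<in>L. u M \<notin> M \<and> (\<forall>b\<in>J. a M dvd u M * b)"
    by blast
  have "\<forall>M\<in>L. \<exists>e. e \<notin> M \<and> (\<forall>M'\<in>L - {M}. e \<in> M')"
    using maximal_ideal_separating_element[OF assms(2) L] by blast
  from bchoice[OF this] obtain e where e: "\<forall>M\<in>L. e M \<notin> M \<and> (\<forall>M'\<in>L - {M}. e M \<in> M')"
    by blast
  define x where "x = (\<Sum>M\<in>L. e M * a M)"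
  have "x \<in> J"
    unfolding x_def using a by (intro ideal_sum[OF assms(1)] ideal_mult_left[OF assms(1)]) auto
  moreover have "locally_generates x J M" if "M \<in> L" for M
  proof (cases "a M = 0")
    case True
    then have "x dvd u M * b" if "b \<in> J" for b
      using u \<open>M \<in> L\<close> that by fastforce
    then show ?thesis
      using u \<open>M \<in> L\<close> unfolding locally_generates_def by blast
  next
    case False
    have "\<forall>M'\<in>L. \<exists>r. u M * a M' = a M * r"
      using u a \<open>M \<in> L\<close> by (simp add: dvd_def)
    from bchoice[OF this] obtain r where r: "\<forall>M'\<in>L. u M * a M' = a M * r M'"
      by blast
    have "a M * u M = a M * r M"
      using r \<open>M \<in> L\<close> by (simp add: mult.commute)
    then have "r M = u M"
      using False by simp
    define w where "w = (\<Sum>M'\<in>L. e M' * r M')"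
    have ux: "u M * x = a M * w"
      unfolding x_def w_def sum_distrib_left
      by (rule sum.cong) (simp_all add: r mult.left_commute)
    have "w \<notin> M"
    proof
      assume "w \<in> M"
      have M: "is_ideal M" using L \<open>M \<in> L\<close> by (simp add: maximal_ideal_def)
      have rest: "(\<Sum>M'\<in>L - {M}. e M' * r M') \<in> M"
        using e \<open>M \<in> L\<close> by (intro ideal_sum[OF M] ideal_mult_right[OF M]) auto
      have "e M * u M = w - (\<Sum>M'\<in>L - {M}. e M' * r M')"
        unfolding w_def sum.remove[OF assms(2) \<open>M \<in> L\<close>] \<open>r M = u M\<close> by simp
      also have "\<dots> \<in> M"
        using ideal_diff[OF M \<open>w \<in> M\<close> rest] .
      finally have "e M * u M \<in> M" .
      moreover have "e M * u M \<notin> M"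
        using maximal_ideal_mult_notin L e u \<open>M \<in> L\<close> by blast
      ultimately show False by contradiction
    qed
    have "x dvd (w * u M) * b" if "b \<in> J" for b
    proof -
      have "a M dvd u M * b"
        using u \<open>M \<in> L\<close> \<open>b \<in> J\<close> by blast
      then obtain g where "u M * b = a M * g"
        by (elim dvdE)
      then have "(w * u M) * b = x * (u M * g)"
        using ux by (simp add: ac_simps)
      then show ?thesis by (rule dvdI)
    qed
    moreover have "w * u M \<notin> M"
      using maximal_ideal_mult_notin L \<open>w \<notin> M\<close> u \<open>M \<in> L\<close> by blast
    ultimately show ?thesis
      unfolding locally_generates_def by blast
  qed
  ultimately show ?thesis by blast
qed

lemma pruefer_common_local_generator:
  fixes S :: "'a::idom set"
  assumes "pruefer_domain TYPE('a)" and "is_ideal K" and "S \<subseteq> K" and "finite S"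
    and "b \<in> S" and "b \<noteq> 0" and "finite L" and "\<forall>M\<in>L. maximal_ideal M"
  shows "\<exists>x\<in>K. \<forall>M\<in>L. locally_generates x S M"
proof -
  have "ideal_gen S \<noteq> {0}"
    using assms(5,6) ideal_gen_subset by blast
  then have "invertible_ideal (ideal_gen S)"
    using assms(1,4) is_ideal_ideal_gen
    unfolding pruefer_domain_def fin_gen_ideal_def by blast
  then have "\<exists>x\<in>ideal_gen S. \<forall>M\<in>L. locally_generates x (ideal_gen S) M"
    using assms(7,8) invertible_ideal_locally_principal
    by (intro common_local_generator is_ideal_ideal_gen) auto
  moreover have "ideal_gen S \<subseteq> K"
    using assms(2,3) by (rule ideal_gen_minimal)
  ultimately show ?thesis
    using locally_generates_subset ideal_gen_subset by blast
qed

subsection \<open>Absorbing ideals\<close>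

lemma exists_maximal_ideal_colon:
  assumes "is_ideal I" and "y \<notin> I"
  shows "\<exists>M. maximal_ideal M \<and> {r. r * y \<in> I} \<subseteq> M"
proof -
  have "1 \<notin> {r. r * y \<in> I}"
    using assms(2) by simp
  then obtain M where "maximal_ideal M" and "{r. r * y \<in> I} \<subseteq> M"
    by (rule exists_maximal_ideal_superset[OF is_ideal_colon[OF assms(1)]])
  then show ?thesis by blast
qed

lemma prod_notin_ideal_factor_nonzero:
  fixes f :: "'b \<Rightarrow> 'a::idom"
  assumes "is_ideal I" and "prod f A \<notin> I" and "finite A" and "a \<in> A"
  shows "f a \<noteq> 0"
proof
  assume "f a = 0"
  then have "prod f A = 0"
    using assms(3,4) by (intro prod_zero) auto
  then show False
    using assms(2) ideal_zero[OF assms(1)] by metis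
qed

lemma n_absorbing_local_obstruction:
  fixes I :: "'a::comm_ring_1 set"
  assumes "n_absorbing n I"
    and M: "\<forall>j\<in>{..n}. maximal_ideal (M j) \<and> {r. r * (\<Prod>i\<in>{..n} - {j}. z j i) \<in> I} \<subseteq> M j"
    and x: "\<forall>i\<in>{..n}. \<forall>j\<in>{..n} - {i}. locally_generates (x i) {z j i} (M j)"
  shows "(\<Prod>i\<le>n. x i) \<notin> I"
proof
  assume "(\<Prod>i\<le>n. x i) \<in> I"
  then obtain j where "j \<le> n" and xj: "(\<Prod>i\<in>{..n} - {j}. x i) \<in> I"
    using assms(1) unfolding n_absorbing_def by blast
  then have "locally_generates (\<Prod>i\<in>{..n} - {j}. x i) {\<Prod>i\<in>{..n} - {j}. z j i} (M j)"
    using M x by (intro locally_generates_prod) auto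
  then obtain s where "s \<notin> M j" and "(\<Prod>i\<in>{..n} - {j}. x i) dvd s * (\<Prod>i\<in>{..n} - {j}. z j i)"
    unfolding locally_generates_def by blast
  then have "s * (\<Prod>i\<in>{..n} - {j}. z j i) \<in> I"
    using xj assms(1) ideal_dvd unfolding n_absorbing_def by blast
  then show False
    using M \<open>j \<le> n\<close> \<open>s \<notin> M j\<close> by blast
qed

lemma pruefer_n_absorbing_full_product_witness:
  fixes I :: "'a::idom set"
  assumes "pruefer_domain TYPE('a)" and "n \<ge> 1" and "n_absorbing n I"
    and Is: "\<forall>i\<le>n. is_ideal (Is i)"
    and z: "\<forall>j\<in>{..n}. (\<forall>i\<in>{..n} - {j}. z j i \<in> Is i) \<and> (\<Prod>i\<in>{..n} - {j}. z j i) \<notin> I"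
  shows "\<exists>x. (\<forall>i\<in>{..n}. x i \<in> Is i) \<and> (\<Prod>i\<le>n. x i) \<notin> I"
proof -
  have I: "is_ideal I" using assms(3) by (simp add: n_absorbing_def)
  have "\<forall>j\<in>{..n}. \<exists>N. maximal_ideal N \<and> {r. r * (\<Prod>i\<in>{..n} - {j}. z j i) \<in> I} \<subseteq> N"
    using z exists_maximal_ideal_colon[OF I] by blast
  from bchoice[OF this] obtain M
    where M: "\<forall>j\<in>{..n}. maximal_ideal (M j) \<and> {r. r * (\<Prod>i\<in>{..n} - {j}. z j i) \<in> I} \<subseteq> M j"
    by blast
  have "\<forall>i\<in>{..n}. \<exists>x. x \<in> Is i \<and> (\<forall>N\<in>M ` {..n}. locally_generates x ((\<lambda>j. z j i) ` ({..n} - {i})) N)"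
  proof
    fix i assume "i \<in> {..n}"
    have "(if i = 0 then 1 else 0) \<in> {..n} - {i}"
      using \<open>n \<ge> 1\<close> by auto
    then obtain j where j: "j \<in> {..n} - {i}" by blast
    then have "z j i \<noteq> 0"
      using z \<open>i \<in> {..n}\<close> by (intro prod_notin_ideal_factor_nonzero[OF I, of "z j" "{..n} - {j}"]) auto
    then have "\<exists>x\<in>Is i. \<forall>N\<in>M ` {..n}. locally_generates x ((\<lambda>j. z j i) ` ({..n} - {i})) N"
      using Is z M j \<open>i \<in> {..n}\<close> by (intro pruefer_common_local_generator[OF assms(1)]) auto
    then show "\<exists>x. x \<in> Is i \<and> (\<forall>N\<in>M ` {..n}. locally_generates x ((\<lambda>j. z j i) ` ({..n} - {i})) N)"
      by blast
  qed
  from bchoice[OF this] obtain x where x: "\<forall>i\<in>{..n}. x i \<in> Is i"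
    and gen: "\<forall>i\<in>{..n}. \<forall>N\<in>M ` {..n}. locally_generates (x i) ((\<lambda>j. z j i) ` ({..n} - {i})) N"
    by blast
  have "\<forall>i\<in>{..n}. \<forall>j\<in>{..n} - {i}. locally_generates (x i) {z j i} (M j)"
    using gen locally_generates_subset by blast
  then have "(\<Prod>i\<le>n. x i) \<notin> I"
    using M by (intro n_absorbing_local_obstruction[OF assms(3)])
  with x show ?thesis by blast
qed

theorem corollary1:
  fixes I :: "'a::idom set" and n :: nat
  assumes "pruefer_domain TYPE('a)" and "n \<ge> 1" and "n_absorbing n I"
  shows "strongly_n_absorbing n I"
proof -
  have I: "is_ideal I" using assms(3) by (simp add: n_absorbing_def)
  have "\<exists>j\<le>n. ideal_prod Is ({..n} - {j}) \<subseteq> I"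
    if Is: "\<forall>i\<le>n. is_ideal (Is i)" and sub: "ideal_prod Is {..n} \<subseteq> I" for Is
  proof (rule ccontr)
    assume "\<not> ?thesis"
    then have "\<forall>j\<in>{..n}. \<exists>z. (\<forall>i\<in>{..n} - {j}. z i \<in> Is i) \<and> (\<Prod>i\<in>{..n} - {j}. z i) \<notin> I"
      using ideal_prod_not_subset[OF I] by blast
    from bchoice[OF this] obtain z
      where "\<forall>j\<in>{..n}. (\<forall>i\<in>{..n} - {j}. z j i \<in> Is i) \<and> (\<Prod>i\<in>{..n} - {j}. z j i) \<notin> I"
      by blast
    from pruefer_n_absorbing_full_product_witness[OF assms Is this]
    obtain x where "\<forall>i\<in>{..n}. x i \<in> Is i" and "(\<Prod>i\<le>n. x i) \<notin> I"
      by blast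
    moreover have "(\<Prod>i\<le>n. x i) \<in> ideal_prod Is {..n}"
      using calculation(1) by (intro prod_in_ideal_prod) auto
    ultimately show False
      using sub by blast
  qed
  then show ?thesis
    using I unfolding strongly_n_absorbing_def by blast
qed

end
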